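(* Let $\alpha\in(0,\tfrac12)$. Then $h$, regarded as a function on $\mathbb T$ via $h(e^{i\theta})=h(\theta)$, satisfies $$|h(z_1)-h(z_2)|\le\cosh(\pi)\,d(z_1,z_2)^{1-2\alpha}\quad\text{for all }z_1,z_2\in\mathbb T.$$
   Context: $\mathbb T$ is the unit circle; for $\theta\in\mathbb R$, $|\theta|_o$ is the absolute value of the representative of $\theta$ mod $2\pi$ in $(-\pi,\pi]$; $d(e^{i\theta_1},e^{i\theta_2})=|\theta_1-\theta_2|_o$ is the geodesic distance. $h(\theta)=\sin\theta/|\theta|_o^{2\alpha}$ for $\theta\notin2\pi\mathbb Z$ and $h(\theta)=0$ for $\theta\in2\pi\mathbb Z$ (a $2\pi$-periodic function). *)

theory Defs
  imports "HOL-Analysis.Analysis"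
begin

text \<open>Absolute value of the representative of theta mod 2 pi in (-pi, pi].\<close>
definition absmod :: "real \<Rightarrow> real" where
  "absmod \<theta> = \<bar>\<theta> - 2 * pi * real_of_int \<lceil>(\<theta> - pi) / (2 * pi)\<rceil>\<bar>"

definition circ_dist :: "complex \<Rightarrow> complex \<Rightarrow> real" where
  "circ_dist z1 z2 = absmod (Arg z1 - Arg z2)"

definition h :: "real \<Rightarrow> real \<Rightarrow> real" where
  "h \<alpha> \<theta> = (if \<exists>k::int. \<theta> = 2 * pi * real_of_int k then 0
              else sin \<theta> / (absmod \<theta> powr (2 * \<alpha>)))"

definition hT :: "real \<Rightarrow> complex \<Rightarrow> real" where
  "hT \<alpha> z = h \<alpha> (Arg z)"

end

theory Submission
  imports Defs
begin

text \<open>For \<open>0 \<le> p < 1\<close> the function \<open>sin t / \<bar>t\<bar> powr p\<close> is Hoelder of exponent \<open>1 - p\<close>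
  with constant 2 on the whole line: for \<open>0 < y < x\<close> write the difference as
  \<open>(sin x - sin y) / x powr p + sin y * (1 / x powr p - 1 / y powr p)\<close> and use
  \<open>\<bar>sin x - sin y\<bar> \<le> x - y\<close> and \<open>\<bar>sin y\<bar> \<le> y\<close>; oddness and
  \<open>\<bar>sin t\<bar> / \<bar>t\<bar> powr p \<le> \<bar>t\<bar> powr (1 - p)\<close> cover the other sign patterns. The function
  takes the same value at \<open>pi\<close> and \<open>-pi\<close>, so when the circle distance is realised across \<open>pi\<close>
  one passes through \<open>\<plusminus>pi\<close>; this doubles the constant to \<open>4 \<le> cosh pi\<close>.\<close>

lemma abs_sin_diff_le:
  fixes x y :: real
  shows "\<bar>sin x - sin y\<bar> \<le> \<bar>x - y\<bar>"
proof -
  have "\<bar>sin x - sin y\<bar> = 2 * \<bar>sin ((x - y) / 2)\<bar> * \<bar>cos ((x + y) / 2)\<bar>"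
    by (simp add: sin_diff_sin abs_mult)
  also have "\<dots> \<le> 2 * \<bar>(x - y) / 2\<bar> * 1"
    by (intro mult_mono abs_sin_x_le_abs_x abs_cos_le_one) auto
  finally show ?thesis by simp
qed

definition sin_div_powr :: "real \<Rightarrow> real \<Rightarrow> real" where
  "sin_div_powr p t = sin t / \<bar>t\<bar> powr p"

lemma sin_div_powr_minus: "sin_div_powr p (- t) = - sin_div_powr p t"
  by (simp add: sin_div_powr_def)

lemma abs_sin_div_powr_le:
  assumes "0 \<le> p"
  shows "\<bar>sin_div_powr p t\<bar> \<le> \<bar>t\<bar> powr (1 - p)"
proof (cases "t = 0")
  case True
  then show ?thesis by (simp add: sin_div_powr_def)
next
  case False
  have "\<bar>sin_div_powr p t\<bar> = \<bar>sin t\<bar> / \<bar>t\<bar> powr p"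
    by (simp add: sin_div_powr_def abs_divide)
  also have "\<dots> \<le> \<bar>t\<bar> / \<bar>t\<bar> powr p"
    by (intro divide_right_mono abs_sin_x_le_abs_x) simp
  also have "\<dots> = \<bar>t\<bar> powr (1 - p)"
    using False by (simp add: powr_diff)
  finally show ?thesis .
qed

lemma sin_div_powr_holder_pos:
  assumes "0 \<le> p" "p < 1" "0 < y" "y < x"
  shows "\<bar>sin_div_powr p x - sin_div_powr p y\<bar> \<le> 2 * (x - y) powr (1 - p)"
proof -
  have xp: "x powr p > 0" "y powr p > 0"
    using assms by auto
  have split: "sin_div_powr p x - sin_div_powr p y
      = (sin x - sin y) / x powr p + sin y * (1 / x powr p - 1 / y powr p)"
    using assms xp by (simp add: sin_div_powr_def field_simps)
  have diff_le: "(x - y) / x powr p \<le> (x - y) powr (1 - p)"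
  proof -
    have "(x - y) / x powr p \<le> (x - y) / (x - y) powr p"
      using assms by (intro divide_left_mono powr_mono2) auto
    also have "\<dots> = (x - y) powr (1 - p)"
      using assms by (simp add: powr_diff)
    finally show ?thesis .
  qed
  have first: "\<bar>(sin x - sin y) / x powr p\<bar> \<le> (x - y) / x powr p"
    using abs_sin_diff_le[of x y] xp assms by (simp add: abs_divide divide_right_mono)
  have powr_le: "1 / x powr p \<le> 1 / y powr p"
    using xp assms by (simp add: frac_le powr_mono2)
  have second: "\<bar>sin y * (1 / x powr p - 1 / y powr p)\<bar> \<le> (x - y) / x powr p"
  proof -
    have "\<bar>sin y * (1 / x powr p - 1 / y powr p)\<bar> = \<bar>sin y\<bar> * (1 / y powr p - 1 / x powr p)"
      using powr_le by (simp add: abs_mult)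
    also have "\<dots> \<le> y * (1 / y powr p - 1 / x powr p)"
      using powr_le assms abs_sin_x_le_abs_x[of y] by (intro mult_right_mono) auto
    also have "\<dots> = y powr (1 - p) - y / x powr p"
      using assms by (simp add: powr_diff field_simps)
    also have "\<dots> \<le> x powr (1 - p) - y / x powr p"
      using assms by (simp add: powr_mono2)
    also have "\<dots> = (x - y) / x powr p"
      using assms xp by (simp add: powr_diff field_simps)
    finally show ?thesis .
  qed
  show ?thesis
    unfolding split using first second diff_le by linarith
qed

lemma sin_div_powr_holder:
  assumes "0 \<le> p" "p < 1"
  shows "\<bar>sin_div_powr p x - sin_div_powr p y\<bar> \<le> 2 * \<bar>x - y\<bar> powr (1 - p)"
proof (induction x y rule: linorder_wlog)
  case (le a b)
  consider "a = b" | "0 < a" "a < b" | "b < 0" "a < b" | "a \<le> 0" "0 \<le> b"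
    using le by linarith
  then show ?case
  proof cases
    case 2
    then show ?thesis
      using sin_div_powr_holder_pos[of p a b] assms by (simp add: abs_minus_commute abs_of_neg)
  next
    case 3
    then show ?thesis
      using sin_div_powr_holder_pos[of p "- b" "- a"] assms
      by (simp add: sin_div_powr_minus abs_of_neg)
  next
    case 4
    then have "\<bar>a\<bar> powr (1 - p) \<le> \<bar>a - b\<bar> powr (1 - p)" "\<bar>b\<bar> powr (1 - p) \<le> \<bar>a - b\<bar> powr (1 - p)"
      using assms by (auto intro!: powr_mono2)
    then show ?thesis
      using abs_sin_div_powr_le[of p a] abs_sin_div_powr_le[of p b] assms by linarith
  qed simp
next
  case (sym a b)
  then show ?case by (simp add: abs_minus_commute)
qed

lemma absmod_eq_abs:
  assumes "- pi < t" "t \<le> pi"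
  shows "absmod t = \<bar>t\<bar>"
proof -
  have "\<lceil>(t - pi) / (2 * pi)\<rceil> = 0"
    using assms by (simp add: ceiling_eq_iff field_simps)
  then show ?thesis by (simp add: absmod_def)
qed

lemma absmod_cases:
  assumes "- 2 * pi < t" "t < 2 * pi"
  shows "absmod t = \<bar>t\<bar> \<or> absmod t = \<bar>t - 2 * pi\<bar> \<or> absmod t = \<bar>t + 2 * pi\<bar>"
proof -
  define k where "k = \<lceil>(t - pi) / (2 * pi)\<rceil>"
  have "- 2 < k" "k < 2"
    unfolding k_def using assms by (simp_all add: less_ceiling_iff ceiling_less_iff field_simps)
  then have "k = 0 \<or> k = 1 \<or> k = -1" by linarith
  then show ?thesis
    unfolding absmod_def k_def[symmetric] by (auto simp: algebra_simps)
qed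

lemma holder_absmod:
  fixes f :: "real \<Rightarrow> real"
  assumes holder: "\<And>x y. \<bar>f x - f y\<bar> \<le> C * \<bar>x - y\<bar> powr \<beta>"
    and f_pi: "f pi = f (- pi)" and "0 \<le> C" "0 \<le> \<beta>"
    and a: "- pi < a" "a \<le> pi" and b: "- pi < b" "b \<le> pi"
  shows "\<bar>f a - f b\<bar> \<le> 2 * C * absmod (a - b) powr \<beta>"
proof -
  define d where "d = absmod (a - b)"
  have via_pi: "\<bar>f a - f b\<bar> \<le> 2 * C * d powr \<beta>"
    if "\<bar>a - s\<bar> \<le> d" "\<bar>- s - b\<bar> \<le> d" "s = pi \<or> s = - pi" for s
  proof -
    have "\<bar>f a - f b\<bar> \<le> \<bar>f a - f s\<bar> + \<bar>f (- s) - f b\<bar>"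
      using f_pi \<open>s = pi \<or> s = - pi\<close> by auto
    also have "\<dots> \<le> C * \<bar>a - s\<bar> powr \<beta> + C * \<bar>- s - b\<bar> powr \<beta>"
      by (intro add_mono holder)
    also have "\<dots> \<le> C * d powr \<beta> + C * d powr \<beta>"
      using that \<open>0 \<le> C\<close> \<open>0 \<le> \<beta>\<close> by (intro add_mono mult_left_mono powr_mono2) auto
    finally show ?thesis by simp
  qed
  consider "d = \<bar>a - b\<bar>" | "d = \<bar>a - b - 2 * pi\<bar>" | "d = \<bar>a - b + 2 * pi\<bar>"
    using absmod_cases[of "a - b"] a b unfolding d_def by linarith
  then have "\<bar>f a - f b\<bar> \<le> 2 * C * d powr \<beta>"
  proof cases
    case 1
    then show ?thesis using holder[of a b] \<open>0 \<le> C\<close> by (simp add: mult_right_mono)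
  next
    case 2
    then show ?thesis using via_pi[of pi] a b by simp
  next
    case 3
    then show ?thesis using via_pi[of "- pi"] a b by simp
  qed
  then show ?thesis by (simp add: d_def)
qed

lemma hT_eq_sin_div_powr: "hT \<alpha> z = sin_div_powr (2 * \<alpha>) (Arg z)"
proof (cases "\<exists>k::int. Arg z = 2 * pi * real_of_int k")
  case True
  then obtain k :: int where k: "Arg z = 2 * pi * k" by blast
  have "pi * (- 1) < pi * (2 * k)" "pi * (2 * k) \<le> pi * 1"
    using Arg_bounded[of z] k by (simp_all add: algebra_simps)
  then have "- 1 < 2 * real_of_int k" "2 * real_of_int k \<le> 1"
    by (simp_all only: mult_less_cancel_left_pos[OF pi_gt_zero] mult_le_cancel_left_pos[OF pi_gt_zero])
  then have "k = 0"
    by linarith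
  then show ?thesis using k by (simp add: hT_def h_def sin_div_powr_def)
next
  case False
  then show ?thesis
    using absmod_eq_abs Arg_bounded[of z] by (simp add: hT_def h_def sin_div_powr_def)
qed

lemma four_le_cosh_pi: "4 \<le> cosh pi"
proof -
  have "(8::real) \<le> 2 ^ 3" by simp
  also have "\<dots> \<le> exp 1 ^ 3"
    using exp_ge_add_one_self[of 1] by (intro power_mono) auto
  also have "\<dots> = exp 3"
    by (simp add: exp_of_nat_mult[symmetric])
  also have "\<dots> \<le> exp pi"
    using pi_gt3 by simp
  finally have "8 \<le> exp pi + exp (- pi)"
    using exp_gt_zero[of "- pi"] by linarith
  then show ?thesis
    by (simp add: cosh_field_def)
qed

theorem mainTheorem14:
  fixes \<alpha> :: real and z1 z2 :: complex
  assumes "0 < \<alpha>" and "\<alpha> < 1/2"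
    and "cmod z1 = 1" and "cmod z2 = 1"
  shows "\<bar>hT \<alpha> z1 - hT \<alpha> z2\<bar> \<le> cosh pi * circ_dist z1 z2 powr (1 - 2 * \<alpha>)"
proof -
  define f where "f = sin_div_powr (2 * \<alpha>)"
  have "\<bar>f (Arg z1) - f (Arg z2)\<bar> \<le> 2 * 2 * circ_dist z1 z2 powr (1 - 2 * \<alpha>)"
    unfolding circ_dist_def
  proof (rule holder_absmod)
    show "\<bar>f x - f y\<bar> \<le> 2 * \<bar>x - y\<bar> powr (1 - 2 * \<alpha>)" for x y
      unfolding f_def using sin_div_powr_holder assms by simp
  qed (use Arg_bounded[of z1] Arg_bounded[of z2] assms in \<open>auto simp: f_def sin_div_powr_def\<close>)
  also have "\<dots> \<le> cosh pi * circ_dist z1 z2 powr (1 - 2 * \<alpha>)"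
    using four_le_cosh_pi by (intro mult_right_mono) auto
  finally show ?thesis
    by (simp add: f_def hT_eq_sin_div_powr)
qed

end
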